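(* Consider the following controlled single-server queue. Packets arrive according to a Poisson process of rate $\lambda>0$ to a finite buffer of capacity $B\ge 2$ packets (including the packet currently being transmitted); packets arriving when the buffer is full are discarded. Packets are transmitted one at a time. Each transmission is carried out over one of two paths (operating points) $u\in\{a,b\}$: a transmission over path $u$ lasts an exponentially distributed time with rate $\mu_u$ (independent of everything else), and at its completion the packet is successfully delivered with probability $1-p_u$ and lost with probability $p_u$, where $0<\mu_a<\mu_b$ and $p_a<p_b$. A decision maker chooses the path for each transmission at the decision epochs, namely immediately after a transmission completion that leaves $n$ packets in the system, $n\in\{0,1,\ldots,B-1\}$ (if $n\ge 1$ the chosen transmission starts immediately; if $n=0$ it starts at the next arrival). Each successful delivery completed at time $\sigma$ yields reward $e^{-\gamma\sigma}$, where $\gamma>0$ is a discount rate, and the objective is to maximize the expected total discounted reward. Then this problem (formulated as a Markov decision process over the states at departures and arrivals) is solved by an optimal policy of threshold type: there exists a unique threshold $t$, $0\le t\le B$, such that the optimal policy transmits via path $a$ at all decision states with $n\le t$ and via path $b$ otherwise.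
   Context: Path $a$ is the more reliable, lower-rate operating point and path $b$ the less reliable, higher-rate operating point of the physical layer. The state at a decision epoch is the number $n$ of packets left in the system after the last transmission completion. A policy assigns to each such state $n$ an action in $\{a,b\}$. *)

theory Defs
  imports "HOL-Analysis.Analysis"
begin

text \<open>Decision states: n \<in> {0..<B} packets left after a transmission completion.\<close>

datatype path = PathA | PathB

text \<open>Discounted probability that exactly k Poisson(lam) arrivals occur during a
  transmission of length S ~ Exp(mu):  E[ exp(-gam S) ; A(S) = k ].\<close>
definition disc_arr_weight :: "real \<Rightarrow> real \<Rightarrow> real \<Rightarrow> nat \<Rightarrow> real" where
  "disc_arr_weight lam gam mu k =
     integral {0..} (\<lambda>s. mu * exp (- mu * s) * (exp (- lam * s) * (lam * s) ^ k / fact k)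
                          * exp (- gam * s))"

text \<open>Discounted transition weight: a transmission starting with m packets in
  the system (1 \<le> m \<le> B) ends leaving j packets; arrivals beyond capacity
  B are discarded, so j = min (m + k) B - 1 when k packets arrive.\<close>
definition trans_weight :: "real \<Rightarrow> real \<Rightarrow> real \<Rightarrow> nat \<Rightarrow> nat \<Rightarrow> nat \<Rightarrow> real" where
  "trans_weight lam gam mu B m j =
     (\<Sum>k. if min (m + k) B - 1 = j then disc_arr_weight lam gam mu k else 0)"

text \<open>Expected discounted reward of one transmission over a path with rate mu and
  loss probability p: E[ exp(-gam S) ] * (1 - p).\<close>
definition trans_reward :: "real \<Rightarrow> real \<Rightarrow> real \<Rightarrow> real" where
  "trans_reward gam mu p = (1 - p) * integral {0..} (\<lambda>s. mu * exp (- mu * s) * exp (- gam * s))"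

text \<open>Discount factor of an idle period (waiting for the next arrival in state 0).\<close>
definition idle_disc :: "real \<Rightarrow> real \<Rightarrow> real" where
  "idle_disc lam gam = integral {0..} (\<lambda>s. lam * exp (- lam * s) * exp (- gam * s))"

definition bellman_pol ::
  "real \<Rightarrow> real \<Rightarrow> (path \<Rightarrow> real) \<Rightarrow> (path \<Rightarrow> real) \<Rightarrow> nat \<Rightarrow> (nat \<Rightarrow> path)
     \<Rightarrow> (nat \<Rightarrow> real) \<Rightarrow> nat \<Rightarrow> real" where
  "bellman_pol lam gam mu p B pol V n =
     (let m = (if n = 0 then 1 else n);
          d = (if n = 0 then idle_disc lam gam else 1);
          u = pol n
      in d * (trans_reward gam (mu u) (p u) + (\<Sum>j<B. trans_weight lam gam (mu u) B m j * V j)))"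

text \<open>Expected total discounted reward of policy pol from decision state n:
  limit of the expected discounted reward collected during the first k transmissions.\<close>
definition policy_value ::
  "real \<Rightarrow> real \<Rightarrow> (path \<Rightarrow> real) \<Rightarrow> (path \<Rightarrow> real) \<Rightarrow> nat \<Rightarrow> (nat \<Rightarrow> path) \<Rightarrow> nat \<Rightarrow> real" where
  "policy_value lam gam mu p B pol n =
     lim (\<lambda>k. ((bellman_pol lam gam mu p B pol) ^^ k) (\<lambda>_. 0) n)"

definition optimal_policy ::
  "real \<Rightarrow> real \<Rightarrow> (path \<Rightarrow> real) \<Rightarrow> (path \<Rightarrow> real) \<Rightarrow> nat \<Rightarrow> (nat \<Rightarrow> path) \<Rightarrow> bool" where
  "optimal_policy lam gam mu p B pol =
     (\<forall>pol'. \<forall>n<B. policy_value lam gam mu p B pol' n \<le> policy_value lam gam mu p B pol n)"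

end

theory Submission
  imports Defs "HOL-Probability.Distributions"
begin

text \<open>The Bellman operators of the discounted problem are monotone contractions in the
  sup-norm with modulus \<open>E[exp (- gam S)] < 1\<close> for the faster service time \<open>S\<close>, so the optimal
  value \<open>V\<close> is their unique fixed point and every policy that is greedy with respect to \<open>V\<close> is
  optimal. A transmission started at level \<open>m\<close> during which \<open>k\<close> packets arrive ends at level
  \<open>min (m + k) B - 1\<close>, and the discounted arrival counts form geometric weights \<open>w\<^sub>u k\<close>.
  Comparing the optimality equations at neighbouring levels shows that the increments
  \<open>V n - V (n - 1)\<close> are nonnegative and nonincreasing. The advantage of path a over path b
  therefore changes from \<open>n\<close> to \<open>n + 1\<close> by \<open>\<Sum>k. (w\<^sub>a k - w\<^sub>b k) * (V (n + k) - V (n + k - 1))\<close>;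
  the faster path b has the larger partial sums of weights, so summation by parts makes this
  change nonpositive and path a is chosen exactly on an initial segment of levels.\<close>

lemma sum_by_parts:
  fixes f x :: "nat \<Rightarrow> real"
  shows "(\<Sum>k<K. f k * x k) = (\<Sum>k<K. (\<Sum>i\<le>k. f i) * (x k - x (Suc k))) + (\<Sum>i<K. f i) * x K"
  by (induction K) (simp_all add: algebra_simps lessThan_Suc_atMost[symmetric])

lemma threshold_of_down_closed:
  fixes P :: "nat \<Rightarrow> bool"
  assumes "\<And>n. P (Suc n) \<Longrightarrow> P n"
  shows "\<exists>t\<le>B. \<forall>n<B. P n \<longleftrightarrow> n < t"
proof -
  define t where "t = (LEAST n. n = B \<or> \<not> P n)"
  have "t \<le> B" unfolding t_def by (rule Least_le) simp
  moreover have "P n \<longleftrightarrow> n < t" if "n < B" for n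
  proof
    assume "P n"
    show "n < t"
    proof (rule ccontr)
      assume "\<not> n < t"
      have "t = B \<or> \<not> P t" unfolding t_def by (rule LeastI[of _ B]) simp
      with \<open>\<not> n < t\<close> \<open>n < B\<close> have "\<not> P t" by simp
      moreover have "P (t + k) \<Longrightarrow> P t" for k
        by (induction k) (use assms in auto)
      then have "P t" using \<open>P n\<close> \<open>\<not> n < t\<close> by (metis le_add_diff_inverse not_less)
      ultimately show False by simp
    qed
  next
    assume "n < t"
    thus "P n" using \<open>n < B\<close> not_less_Least[of n "\<lambda>n. n = B \<or> \<not> P n"] by (auto simp: t_def)
  qed
  ultimately show ?thesis by blast
qed

lemma ex1_threshold:
  fixes f :: "nat \<Rightarrow> 'a"
  assumes "x \<noteq> y" and "t \<le> B" and t: "\<forall>n<B. f n = (if n < t then x else y)"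
  shows "\<exists>!t. t \<le> B \<and> (\<forall>n<B. f n = (if n < t then x else y))"
proof (rule ex1I[of _ t])
  show "t \<le> B \<and> (\<forall>n<B. f n = (if n < t then x else y))"
    using assms by blast
next
  fix s
  assume s: "s \<le> B \<and> (\<forall>n<B. f n = (if n < s then x else y))"
  show "s = t"
  proof (rule ccontr)
    assume "s \<noteq> t"
    then have "min s t < B" and "(min s t < s) \<noteq> (min s t < t)"
      using s \<open>t \<le> B\<close> by (auto simp: min_def)
    then show False
      using s t \<open>x \<noteq> y\<close> by (auto split: if_splits)
  qed
qed

lemma mult_le_one_le_nonneg:
  fixes d x y :: real
  assumes "0 \<le> d" "d \<le> 1" "x \<le> y" "0 \<le> y"
  shows "d * x \<le> y"
  using mult_left_mono[OF \<open>x \<le> y\<close> \<open>0 \<le> d\<close>] mult_left_le_one_le[OF \<open>0 \<le> y\<close> \<open>0 \<le> d\<close> \<open>d \<le> 1\<close>]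
  by linarith

locale monotone_contraction =
  fixes B :: nat and \<rho> :: real and F :: "(nat \<Rightarrow> real) \<Rightarrow> nat \<Rightarrow> real"
  assumes rho_nonneg: "0 \<le> \<rho>" and rho_less_1: "\<rho> < 1"
    and shift_le: "\<And>V W c. \<forall>j<B. V j - W j \<le> c \<Longrightarrow> 0 \<le> c \<Longrightarrow> \<forall>n<B. F V n - F W n \<le> \<rho> * c"
begin

lemma abs_diff_le:
  assumes "\<forall>j<B. \<bar>V j - W j\<bar> \<le> c" and "n < B"
  shows "\<bar>F V n - F W n\<bar> \<le> \<rho> * c"
proof -
  have "0 \<le> c" using assms by force
  then show ?thesis
    using shift_le[of V W c] shift_le[of W V c] assms by (auto simp: abs_le_iff)
qed

lemma subsolution_le_supersolution:
  assumes sub: "\<forall>n<B. W n \<le> F W n" and super: "\<forall>n<B. F V n \<le> V n" and "n < B"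
  shows "W n \<le> V n"
proof -
  define C where "C = (\<Sum>j<B. \<bar>W j - V j\<bar>)"
  have "0 \<le> C" by (simp add: C_def sum_nonneg)
  have bound: "\<forall>n<B. W n - V n \<le> C * \<rho> ^ k" for k
  proof (induction k)
    case 0
    show ?case
      unfolding C_def
      by (auto intro!: order.trans[OF abs_ge_self member_le_sum[where f = "\<lambda>j. \<bar>W j - V j\<bar>"]])
  next
    case (Suc k)
    have "\<forall>n<B. F W n - F V n \<le> \<rho> * (C * \<rho> ^ k)"
      using shift_le Suc.IH \<open>0 \<le> C\<close> rho_nonneg by simp
    then show ?case using sub super by (force simp: mult_ac)
  qed
  have "(\<lambda>k. C * \<rho> ^ k) \<longlonglongrightarrow> C * 0"
    using rho_nonneg rho_less_1 by (intro tendsto_mult_left LIMSEQ_power_zero) auto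
  then have "W n - V n \<le> 0"
    using bound \<open>n < B\<close> by (intro LIMSEQ_le_const[of "\<lambda>k. C * \<rho> ^ k"]) auto
  then show ?thesis by simp
qed

lemma cong_lessThan:
  assumes "\<forall>j<B. V j = W j" and "n < B"
  shows "F V n = F W n"
  using abs_diff_le[of V W 0 n] assms by simp

lemma fixpoint_unique:
  assumes "\<forall>n<B. F L n = L n" and "\<forall>n<B. F V n = V n" and "n < B"
  shows "L n = V n"
  using subsolution_le_supersolution[of L V n] subsolution_le_supersolution[of V L n] assms
  by fastforce

abbreviation iterate :: "nat \<Rightarrow> nat \<Rightarrow> real" where
  "iterate k \<equiv> (F ^^ k) (\<lambda>_. 0)"

lemma iterate_step_le:
  assumes "n < B"
  shows "\<bar>iterate (Suc k) n - iterate k n\<bar> \<le> \<rho> ^ k * (\<Sum>j<B. \<bar>iterate 1 j - iterate 0 j\<bar>)"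
  using assms
proof (induction k arbitrary: n)
  case 0
  then show ?case
    using member_le_sum[of n "{..<B}" "\<lambda>j. \<bar>iterate 1 j - iterate 0 j\<bar>"] by simp
next
  case (Suc k)
  then show ?case
    using abs_diff_le[of "iterate (Suc k)" "iterate k" _ n] by (simp add: mult.assoc)
qed

lemma iterate_converges_to_fixpoint:
  "\<exists>L. (\<forall>n<B. (\<lambda>k. iterate k n) \<longlonglongrightarrow> L n) \<and> (\<forall>n<B. F L n = L n)"
proof -
  define C where "C = (\<Sum>j<B. \<bar>iterate 1 j - iterate 0 j\<bar>)"
  define L where "L n = (\<Sum>i. iterate (Suc i) n - iterate i n)" for n
  have conv: "(\<lambda>k. iterate k n) \<longlonglongrightarrow> L n" if "n < B" for n
  proof -
    have "summable (\<lambda>i. C * \<rho> ^ i)"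
      using rho_nonneg rho_less_1 by (intro summable_mult summable_geometric) auto
    moreover have "norm (iterate (Suc i) n - iterate i n) \<le> C * \<rho> ^ i" for i
      using iterate_step_le[OF that, of i] by (simp add: C_def mult.commute)
    ultimately have "summable (\<lambda>i. iterate (Suc i) n - iterate i n)"
      by (rule summable_comparison_test')
    then have "(\<lambda>k. \<Sum>i<k. iterate (Suc i) n - iterate i n) \<longlonglongrightarrow> L n"
      unfolding L_def by (rule summable_LIMSEQ)
    moreover have "(\<Sum>i<k. iterate (Suc i) n - iterate i n) = iterate k n" for k
      using sum_lessThan_telescope[of "\<lambda>i. iterate i n" k] by simp
    ultimately show ?thesis by simp
  qed
  have "F L n = L n" if "n < B" for n
  proof -
    define e where "e k = (\<Sum>j<B. \<bar>iterate k j - L j\<bar>)" for k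
    have "e \<longlonglongrightarrow> 0"
      unfolding e_def by (intro tendsto_null_sum tendsto_rabs_zero LIM_zero conv) simp
    have "\<forall>j<B. \<bar>iterate k j - L j\<bar> \<le> e k" for k
      unfolding e_def using member_le_sum[of _ "{..<B}" "\<lambda>j. \<bar>iterate k j - L j\<bar>"] by simp
    then have "\<forall>k. norm (iterate (Suc k) n - F L n) \<le> \<rho> * e k"
      using abs_diff_le[OF _ that] by simp
    moreover have "(\<lambda>k. \<rho> * e k) \<longlonglongrightarrow> 0"
      using tendsto_mult_left[OF \<open>e \<longlonglongrightarrow> 0\<close>, of \<rho>] by simp
    ultimately have "(\<lambda>k. iterate (Suc k) n - F L n) \<longlonglongrightarrow> 0"
      by (rule Lim_null_comparison[OF always_eventually])
    then have "(\<lambda>k. iterate (Suc k) n) \<longlonglongrightarrow> F L n"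
      by (rule LIM_zero_cancel)
    moreover have "(\<lambda>k. iterate (Suc k) n) \<longlonglongrightarrow> L n"
      using conv[OF that] by (rule LIMSEQ_Suc)
    ultimately show ?thesis by (rule LIMSEQ_unique)
  qed
  with conv show ?thesis by blast
qed

lemma lim_iterate_fixpoint:
  assumes "n < B"
  shows "F (\<lambda>j. lim (\<lambda>k. iterate k j)) n = lim (\<lambda>k. iterate k n)"
proof -
  obtain L where conv: "\<forall>n<B. (\<lambda>k. iterate k n) \<longlonglongrightarrow> L n" and fixed: "\<forall>n<B. F L n = L n"
    using iterate_converges_to_fixpoint by blast
  have "\<forall>j<B. lim (\<lambda>k. iterate k j) = L j"
    using conv by (auto intro: limI)
  then show ?thesis
    using cong_lessThan[of _ L n] fixed assms by simp
qed

end

text \<open>The integrand is \<open>mu * lam ^ k / c ^ Suc k\<close> times the Erlang density of shape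
  \<open>k + 1\<close> and rate \<open>c = mu + lam + gam\<close>.\<close>
lemma disc_arr_weight_eq:
  assumes "0 < mu + lam + gam"
  shows "disc_arr_weight lam gam mu k = mu * lam ^ k / (mu + lam + gam) ^ Suc k"
proof -
  define c where "c = mu + lam + gam"
  have "0 < c" using assms by (simp add: c_def)
  have "(\<integral>\<^sup>+ x. ennreal (erlang_density k c x) \<partial>lborel) = 1"
    using nn_integral_erlang_ith_moment[OF \<open>0 < c\<close>, of k 0] by simp
  then have "(erlang_density k c has_integral 1) UNIV"
    using \<open>0 < c\<close> by (intro nn_integral_has_integral) auto
  then have "((\<lambda>x. if x \<in> {0..} then c ^ Suc k * x ^ k * exp (- c * x) / fact k else 0) has_integral 1) UNIV"
    by (rule has_integral_eq[rotated]) (auto simp: erlang_density_def)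
  then have "((\<lambda>x. c ^ Suc k * x ^ k * exp (- c * x) / fact k) has_integral 1) {0..}"
    by (simp only: has_integral_restrict_UNIV)
  then have "((\<lambda>x. mu * lam ^ k / c ^ Suc k * (c ^ Suc k * x ^ k * exp (- c * x) / fact k))
      has_integral mu * lam ^ k / c ^ Suc k * 1) {0..}"
    by (rule has_integral_mult_right)
  moreover have "mu * lam ^ k / c ^ Suc k * (c ^ Suc k * x ^ k * exp (- c * x) / fact k) =
      mu * exp (- mu * x) * (exp (- lam * x) * (lam * x) ^ k / fact k) * exp (- gam * x)" for x
  proof -
    have "exp (- c * x) = exp (- mu * x) * exp (- lam * x) * exp (- gam * x)"
      by (simp add: c_def algebra_simps flip: exp_add)
    then show ?thesis using \<open>0 < c\<close> by (simp add: power_mult_distrib field_simps)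
  qed
  ultimately have "((\<lambda>x. mu * exp (- mu * x) * (exp (- lam * x) * (lam * x) ^ k / fact k) * exp (- gam * x))
      has_integral mu * lam ^ k / c ^ Suc k) {0..}"
    by (metis (no_types, lifting) has_integral_cong mult_1_right)
  then show ?thesis
    unfolding disc_arr_weight_def c_def[symmetric] by (rule integral_unique)
qed

lemma trans_reward_eq:
  assumes "0 < mu + gam"
  shows "trans_reward gam mu p = (1 - p) * (mu / (mu + gam))"
  using disc_arr_weight_eq[of mu 0 gam 0] assms
  by (simp add: trans_reward_def disc_arr_weight_def)

lemma idle_disc_eq:
  assumes "0 < lam + gam"
  shows "idle_disc lam gam = lam / (lam + gam)"
  using disc_arr_weight_eq[of lam 0 gam 0] assms
  by (simp add: idle_disc_def disc_arr_weight_def)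

text \<open>Of the hypotheses on the loss probabilities only \<open>p u \<le> 1\<close>, i.e. nonnegative rewards,
  is needed: the rewards do not depend on the level, so they cancel from the advantage of path a.\<close>
locale queue_model =
  fixes lam gam :: real and mu p :: "path \<Rightarrow> real" and B :: nat
  assumes lam_pos: "0 < lam" and gam_pos: "0 < gam" and B_ge_2: "2 \<le> B"
    and mu_A_pos: "0 < mu PathA" and mu_A_less_B: "mu PathA < mu PathB"
    and p_le_1: "p u \<le> 1"
begin

lemma mu_pos: "0 < mu u"
  using mu_A_pos mu_A_less_B by (cases u) auto

definition arr_ratio :: "path \<Rightarrow> real" where
  "arr_ratio u = lam / (mu u + lam + gam)"

definition serv_disc :: "path \<Rightarrow> real" where
  "serv_disc u = mu u / (mu u + gam)"

definition arr_wt :: "path \<Rightarrow> nat \<Rightarrow> real" where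
  "arr_wt u k = disc_arr_weight lam gam (mu u) k"

lemma arr_ratio_bounds: "0 < arr_ratio u" "arr_ratio u < 1"
  using mu_pos[of u] lam_pos gam_pos by (auto simp: arr_ratio_def)

lemma serv_disc_bounds: "0 < serv_disc u" "serv_disc u < 1"
  using mu_pos[of u] gam_pos by (auto simp: serv_disc_def)

lemma serv_disc_le_B: "serv_disc u \<le> serv_disc PathB"
  using mu_A_pos mu_A_less_B gam_pos by (cases u) (auto simp: serv_disc_def field_simps)

lemma arr_wt_eq: "arr_wt u k = serv_disc u * (1 - arr_ratio u) * arr_ratio u ^ k"
proof -
  define c where "c = mu u + lam + gam"
  have "0 < c" "0 < mu u + gam"
    using mu_pos[of u] lam_pos gam_pos by (auto simp: c_def)
  have "1 - arr_ratio u = (c - lam) / c"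
    using \<open>0 < c\<close> by (simp add: arr_ratio_def c_def[symmetric] diff_divide_distrib)
  also have "c - lam = mu u + gam"
    by (simp add: c_def)
  finally have "serv_disc u * (1 - arr_ratio u) = mu u / c"
    using \<open>0 < mu u + gam\<close> by (simp add: serv_disc_def)
  then show ?thesis
    using \<open>0 < c\<close> disc_arr_weight_eq[of "mu u" lam gam k]
    by (simp add: arr_wt_def arr_ratio_def c_def[symmetric] power_divide)
qed

lemma arr_wt_nonneg: "0 \<le> arr_wt u k"
  using serv_disc_bounds[of u] arr_ratio_bounds[of u] by (simp add: arr_wt_eq)

lemma sum_arr_wt: "(\<Sum>i<K. arr_wt u i) = serv_disc u * (1 - arr_ratio u ^ K)"
proof -
  have "(\<Sum>i<K. arr_wt u i) = serv_disc u * ((1 - arr_ratio u) * (\<Sum>i<K. arr_ratio u ^ i))"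
    by (simp add: arr_wt_eq sum_distrib_left mult.assoc)
  then show ?thesis
    using arr_ratio_bounds[of u] by (simp add: sum_gp_strict)
qed

lemma arr_wt_sums: "arr_wt u sums serv_disc u"
proof -
  have "(\<lambda>K. serv_disc u * (1 - arr_ratio u ^ K)) \<longlonglongrightarrow> serv_disc u * (1 - 0)"
    using arr_ratio_bounds[of u] by (intro tendsto_intros LIMSEQ_power_zero) auto
  then show ?thesis
    by (simp add: sums_def sum_arr_wt)
qed

lemma sum_arr_wt_A_le_B: "(\<Sum>i<K. arr_wt PathA i) \<le> (\<Sum>i<K. arr_wt PathB i)"
proof -
  have "arr_ratio PathB \<le> arr_ratio PathA"
    using lam_pos mu_A_less_B mu_A_pos gam_pos by (simp add: arr_ratio_def frac_le)
  then have "arr_ratio PathB ^ K \<le> arr_ratio PathA ^ K"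
    using arr_ratio_bounds by (intro power_mono) (auto intro: less_imp_le)
  moreover have "arr_ratio PathA ^ K \<le> 1"
    using arr_ratio_bounds[of PathA] by (simp add: power_le_one)
  ultimately show ?thesis
    using serv_disc_le_B[of PathA] serv_disc_bounds[of PathA]
    by (simp add: sum_arr_wt mult_mono)
qed

lemma summable_arr_wt_mult:
  assumes "\<And>k. \<bar>X k\<bar> \<le> M"
  shows "summable (\<lambda>k. arr_wt u k * X k)"
proof (rule summable_comparison_test')
  show "summable (\<lambda>k. arr_wt u k * M)"
    using arr_wt_sums by (intro summable_mult2 sums_summable)
  show "norm (arr_wt u k * X k) \<le> arr_wt u k * M" for k
    using assms arr_wt_nonneg by (simp add: abs_mult mult_left_mono)
qed

lemma suminf_arr_wt_mono:
  assumes "\<And>k. X k \<le> Y k" "\<And>k. \<bar>X k\<bar> \<le> M" "\<And>k. \<bar>Y k\<bar> \<le> M"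
  shows "(\<Sum>k. arr_wt u k * X k) \<le> (\<Sum>k. arr_wt u k * Y k)"
  using assms arr_wt_nonneg by (intro suminf_le summable_arr_wt_mult mult_left_mono) auto

lemma suminf_arr_wt_const: "(\<Sum>k. arr_wt u k * c) = serv_disc u * c"
  using sums_mult2[OF arr_wt_sums, of u c] by (rule sums_unique[symmetric])

definition idle_factor :: "nat \<Rightarrow> real" where
  "idle_factor n = (if n = 0 then idle_disc lam gam else 1)"

definition start_level :: "nat \<Rightarrow> nat" where
  "start_level n = (if n = 0 then 1 else n)"

definition cont_value :: "path \<Rightarrow> (nat \<Rightarrow> real) \<Rightarrow> nat \<Rightarrow> real" where
  "cont_value u V m = (\<Sum>k. arr_wt u k * V (min (m + k) B - 1))"

definition q_value :: "path \<Rightarrow> (nat \<Rightarrow> real) \<Rightarrow> nat \<Rightarrow> real" where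
  "q_value u V n = trans_reward gam (mu u) (p u) + cont_value u V (start_level n)"

lemma idle_factor_eq: "idle_factor n = (if n = 0 then lam / (lam + gam) else 1)"
  using idle_disc_eq[of lam gam] lam_pos gam_pos by (simp add: idle_factor_def)

lemma idle_factor_bounds: "0 \<le> idle_factor n" "idle_factor n \<le> 1"
  using lam_pos gam_pos by (auto simp: idle_factor_eq)

lemma trans_reward_nonneg: "0 \<le> trans_reward gam (mu u) (p u)"
  using trans_reward_eq[of "mu u" gam "p u"] mu_pos[of u] gam_pos p_le_1[of u] by simp

lemma abs_level_le: "\<bar>(V :: nat \<Rightarrow> real) (min x B - 1)\<bar> \<le> (\<Sum>j<B. \<bar>V j\<bar>)"
  using B_ge_2 by (intro member_le_sum[where f = "\<lambda>j. \<bar>V j\<bar>", simplified]) auto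

lemma summable_cont_value: "summable (\<lambda>k. arr_wt u k * V (min (m + k) B - 1))"
  by (rule summable_arr_wt_mult[OF abs_level_le])

lemma sum_trans_weight_eq:
  assumes "1 \<le> m"
  shows "(\<Sum>j<B. trans_weight lam gam (mu u) B m j * V j) = cont_value u V m"
proof -
  define f where "f j k = (if min (m + k) B - 1 = j then arr_wt u k else 0) * V j" for j k
  have summable_f: "summable (f j)" for j
    unfolding f_def
    by (rule summable_mult2, rule summable_comparison_test'[OF sums_summable[OF arr_wt_sums[of u]]])
       (simp add: arr_wt_nonneg)
  have "trans_weight lam gam (mu u) B m j * V j = suminf (f j)" for j
  proof -
    have "summable (\<lambda>k. if min (m + k) B - 1 = j then arr_wt u k else 0)"
      by (rule summable_comparison_test'[OF sums_summable[OF arr_wt_sums[of u]]]) (simp add: arr_wt_nonneg)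
    then show ?thesis
      unfolding trans_weight_def f_def arr_wt_def[symmetric] by (simp add: suminf_mult2)
  qed
  then have "(\<Sum>j<B. trans_weight lam gam (mu u) B m j * V j) = (\<Sum>k. \<Sum>j<B. f j k)"
    using summable_f by (simp add: suminf_sum)
  also have "(\<lambda>k. \<Sum>j<B. f j k) = (\<lambda>k. arr_wt u k * V (min (m + k) B - 1))"
  proof
    fix k
    have "min (m + k) B - 1 < B" using B_ge_2 by simp
    moreover have "(\<Sum>j<B. f j k) = (\<Sum>j<B. if j = min (m + k) B - 1 then arr_wt u k * V j else 0)"
      by (intro sum.cong) (auto simp: f_def)
    ultimately show "(\<Sum>j<B. f j k) = arr_wt u k * V (min (m + k) B - 1)"
      by simp
  qed
  finally show ?thesis by (simp add: cont_value_def)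
qed

lemma bellman_pol_eq: "bellman_pol lam gam mu p B pol V n = idle_factor n * q_value (pol n) V n"
  unfolding bellman_pol_def Let_def q_value_def idle_factor_def start_level_def
  by (simp add: sum_trans_weight_eq)

lemma q_value_shift_le:
  assumes "\<forall>j<B. V j - W j \<le> c" and "0 \<le> c"
  shows "q_value u V n - q_value u W n \<le> serv_disc PathB * c"
proof -
  let ?m = "start_level n"
  have "q_value u V n - q_value u W n = cont_value u V ?m - cont_value u W ?m"
    by (simp add: q_value_def)
  also have "\<dots> = (\<Sum>k. arr_wt u k * V (min (?m + k) B - 1) - arr_wt u k * W (min (?m + k) B - 1))"
    unfolding cont_value_def by (rule suminf_diff[OF summable_cont_value summable_cont_value])
  also have "\<dots> = (\<Sum>k. arr_wt u k * (V (min (?m + k) B - 1) - W (min (?m + k) B - 1)))"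
    by (simp add: right_diff_distrib)
  also have "\<dots> \<le> (\<Sum>k. arr_wt u k * c)"
  proof (rule suminf_arr_wt_mono)
    let ?M = "(\<Sum>j<B. \<bar>V j\<bar>) + (\<Sum>j<B. \<bar>W j\<bar>) + c"
    show "V (min (?m + k) B - 1) - W (min (?m + k) B - 1) \<le> c" for k
      using assms B_ge_2 by simp
    show "\<bar>V (min (?m + k) B - 1) - W (min (?m + k) B - 1)\<bar> \<le> ?M" for k
      using abs_triangle_ineq4[of "V (min (?m + k) B - 1)" "W (min (?m + k) B - 1)"]
        abs_level_le[of V "?m + k"] abs_level_le[of W "?m + k"] assms(2) by linarith
    show "\<bar>c\<bar> \<le> ?M"
      using assms(2) by (simp add: sum_nonneg)
  qed
  also have "\<dots> \<le> serv_disc PathB * c"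
    using serv_disc_le_B[of u] assms(2) by (simp add: suminf_arr_wt_const mult_right_mono)
  finally show ?thesis .
qed

lemma bellman_pol_contraction:
  "monotone_contraction B (serv_disc PathB) (bellman_pol lam gam mu p B pol)"
proof
  show "0 \<le> serv_disc PathB" "serv_disc PathB < 1"
    using serv_disc_bounds[of PathB] by auto
  fix V W :: "nat \<Rightarrow> real" and c :: real
  assume "\<forall>j<B. V j - W j \<le> c" "0 \<le> c"
  then show "\<forall>n<B. bellman_pol lam gam mu p B pol V n - bellman_pol lam gam mu p B pol W n
      \<le> serv_disc PathB * c"
    using q_value_shift_le idle_factor_bounds serv_disc_bounds[of PathB]
    by (simp add: bellman_pol_eq flip: right_diff_distrib) (intro allI impI mult_le_one_le_nonneg; simp)
qed

definition bellman_opt :: "(nat \<Rightarrow> real) \<Rightarrow> nat \<Rightarrow> real" where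
  "bellman_opt V n = idle_factor n * max (q_value PathA V n) (q_value PathB V n)"

lemma bellman_opt_contraction: "monotone_contraction B (serv_disc PathB) bellman_opt"
proof
  show "0 \<le> serv_disc PathB" "serv_disc PathB < 1"
    using serv_disc_bounds[of PathB] by auto
  fix V W :: "nat \<Rightarrow> real" and c :: real
  assume shift: "\<forall>j<B. V j - W j \<le> c" "0 \<le> c"
  show "\<forall>n<B. bellman_opt V n - bellman_opt W n \<le> serv_disc PathB * c"
  proof (intro allI impI)
    fix n
    have "max (q_value PathA V n) (q_value PathB V n) - max (q_value PathA W n) (q_value PathB W n)
        \<le> serv_disc PathB * c"
      using q_value_shift_le[OF shift, of PathA n] q_value_shift_le[OF shift, of PathB n]
      by (simp add: max_def)
    then show "bellman_opt V n - bellman_opt W n \<le> serv_disc PathB * c"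
      unfolding bellman_opt_def right_diff_distrib[symmetric]
      using idle_factor_bounds serv_disc_bounds[of PathB] shift(2)
      by (intro mult_le_one_le_nonneg) auto
  qed
qed

interpretation opt: monotone_contraction B "serv_disc PathB" bellman_opt
  by (rule bellman_opt_contraction)

definition opt_value :: "nat \<Rightarrow> real" where
  "opt_value = (SOME L. \<forall>n<B. bellman_opt L n = L n)"

lemma opt_value_fixpoint: "\<forall>n<B. bellman_opt opt_value n = opt_value n"
proof -
  have "\<exists>L. \<forall>n<B. bellman_opt L n = L n"
    using opt.iterate_converges_to_fixpoint by blast
  then show ?thesis
    unfolding opt_value_def by (rule someI_ex)
qed

lemma opt_value_eq_max:
  assumes "1 \<le> n" "n < B"
  shows "opt_value n = max (q_value PathA opt_value n) (q_value PathB opt_value n)"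
  using opt_value_fixpoint[rule_format, of n] assms by (simp add: bellman_opt_def idle_factor_def)

lemma opt_value_0: "opt_value 0 = lam / (lam + gam) * opt_value 1"
  using opt_value_fixpoint[rule_format, of 0] opt_value_eq_max[of 1] B_ge_2
  by (simp add: bellman_opt_def idle_factor_eq q_value_def start_level_def)

lemma opt_value_nonneg:
  assumes "n < B"
  shows "0 \<le> opt_value n"
proof -
  have "0 \<le> bellman_opt (\<lambda>_. 0) n" for n
    using idle_factor_bounds(1)[of n] trans_reward_nonneg[of PathA]
    by (simp add: bellman_opt_def q_value_def cont_value_def)
  then show ?thesis
    using opt.subsolution_le_supersolution[of "\<lambda>_. 0" opt_value n] opt_value_fixpoint assms by simp
qed

lemma q_value_le_opt_value:
  assumes "1 \<le> n" "n < B"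
  shows "q_value u opt_value n \<le> opt_value n"
  using opt_value_eq_max[OF assms] by (cases u) auto

lemma ex_q_value_eq_opt_value:
  assumes "1 \<le> n" "n < B"
  obtains u where "q_value u opt_value n = opt_value n"
  using opt_value_eq_max[OF assms] by (metis max_def)

text \<open>Stated through the levels \<open>min i B - 1\<close> so that differences of \<open>cont_value\<close> at
  neighbouring levels are weighted increments (\<open>q_value_Suc_diff\<close>); \<open>incr_eq\<close> gives the
  explicit form.\<close>
definition incr :: "(nat \<Rightarrow> real) \<Rightarrow> nat \<Rightarrow> real" where
  "incr V i = V (min (Suc i) B - 1) - V (min i B - 1)"

lemma incr_eq: "incr V i = (if 0 < i \<and> i < B then V i - V (i - 1) else 0)"
  unfolding incr_def by (auto simp: min_def)

lemma abs_incr_le: "\<bar>incr V i\<bar> \<le> 2 * (\<Sum>j<B. \<bar>V j\<bar>)"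
  using abs_level_le[of V "Suc i"] abs_level_le[of V i] unfolding incr_def by linarith

lemma q_value_Suc_diff:
  assumes "1 \<le> i"
  shows "q_value u V (Suc i) - q_value u V i = (\<Sum>k. arr_wt u k * incr V (i + k))"
proof -
  have "q_value u V (Suc i) - q_value u V i = cont_value u V (Suc i) - cont_value u V i"
    using assms by (simp add: q_value_def start_level_def)
  also have "\<dots> = (\<Sum>k. arr_wt u k * V (min (Suc i + k) B - 1) - arr_wt u k * V (min (i + k) B - 1))"
    unfolding cont_value_def by (rule suminf_diff[OF summable_cont_value summable_cont_value])
  also have "\<dots> = (\<Sum>k. arr_wt u k * incr V (i + k))"
    by (simp add: incr_def right_diff_distrib)
  finally show ?thesis .
qed

lemma suminf_arr_wt_incr_ge:
  assumes "\<And>k. c \<le> incr V (i + k)"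
  shows "serv_disc u * c \<le> (\<Sum>k. arr_wt u k * incr V (i + k))"
  using assms abs_incr_le[of V]
  by (subst suminf_arr_wt_const[symmetric], intro suminf_arr_wt_mono[where M = "2 * (\<Sum>j<B. \<bar>V j\<bar>) + \<bar>c\<bar>"])
     (auto intro: add_increasing2)

lemma suminf_arr_wt_incr_le:
  assumes "\<And>k. incr V (i + k) \<le> c"
  shows "(\<Sum>k. arr_wt u k * incr V (i + k)) \<le> serv_disc u * c"
  using assms abs_incr_le[of V]
  by (subst suminf_arr_wt_const[symmetric], intro suminf_arr_wt_mono[where M = "2 * (\<Sum>j<B. \<bar>V j\<bar>) + \<bar>c\<bar>"])
     (auto intro: add_increasing2)

lemma opt_value_incr_lower:
  assumes "1 \<le> i" "Suc i < B"
  obtains u where "(\<Sum>k. arr_wt u k * incr opt_value (i + k)) \<le> incr opt_value (Suc i)"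
proof -
  obtain u where u: "q_value u opt_value i = opt_value i"
    using ex_q_value_eq_opt_value[of i] assms by auto
  have "q_value u opt_value (Suc i) - q_value u opt_value i \<le> incr opt_value (Suc i)"
    using q_value_le_opt_value[of "Suc i" u] u assms by (simp add: incr_eq)
  then show thesis
    using that q_value_Suc_diff[OF assms(1)] by auto
qed

lemma opt_value_incr_upper:
  assumes "1 \<le> i" "Suc i < B"
  obtains u where "incr opt_value (Suc i) \<le> (\<Sum>k. arr_wt u k * incr opt_value (i + k))"
proof -
  obtain u where u: "q_value u opt_value (Suc i) = opt_value (Suc i)"
    using ex_q_value_eq_opt_value[of "Suc i"] assms by auto
  have "incr opt_value (Suc i) \<le> q_value u opt_value (Suc i) - q_value u opt_value i"
    using q_value_le_opt_value[of i u] u assms by (simp add: incr_eq)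
  then show thesis
    using that q_value_Suc_diff[OF assms(1)] by auto
qed

text \<open>Minimum principle: at a most negative increment the bound of \<open>opt_value_incr_lower\<close>
  reproduces that increment scaled by \<open>serv_disc u < 1\<close>, which is impossible. Level 1 is
  excluded separately through \<open>opt_value_0\<close>.\<close>
lemma opt_value_incr_nonneg: "0 \<le> incr opt_value i"
proof -
  obtain n where n: "n \<in> {1..<B}" "\<forall>i\<in>{1..<B}. incr opt_value n \<le> incr opt_value i"
    using ex_is_arg_min_if_finite[of "{1..<B}" "incr opt_value"] B_ge_2
    by (auto simp: is_arg_min_linorder)
  have "0 \<le> incr opt_value n"
  proof (rule ccontr)
    assume neg: "\<not> 0 \<le> incr opt_value n"
    then have min: "incr opt_value n \<le> incr opt_value i" for i
      using n by (cases "i \<in> {1..<B}") (auto simp: incr_eq)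
    have "incr opt_value 1 = gam / (lam + gam) * opt_value 1"
      using B_ge_2 lam_pos gam_pos by (simp add: incr_eq opt_value_0 field_simps)
    then have "0 \<le> incr opt_value 1"
      using opt_value_nonneg[of 1] B_ge_2 lam_pos gam_pos by simp
    then have "n \<noteq> 1"
      using neg by auto
    then obtain i where i: "1 \<le> i" "n = Suc i" "Suc i < B"
      using n(1) by (cases n) auto
    obtain u where "(\<Sum>k. arr_wt u k * incr opt_value (i + k)) \<le> incr opt_value (Suc i)"
      using opt_value_incr_lower[OF i(1,3)] by blast
    then have "(\<Sum>k. arr_wt u k * incr opt_value (i + k)) \<le> incr opt_value n"
      using i(2) by simp
    moreover have "serv_disc u * incr opt_value n \<le> (\<Sum>k. arr_wt u k * incr opt_value (i + k))"
      using min by (rule suminf_arr_wt_incr_ge)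
    moreover have "incr opt_value n < serv_disc u * incr opt_value n"
      using neg serv_disc_bounds[of u] by (simp add: mult_less_cancel_right2)
    ultimately show False by linarith
  qed
  show ?thesis
  proof (cases "i \<in> {1..<B}")
    case True
    then have "incr opt_value n \<le> incr opt_value i" using n(2) by blast
    then show ?thesis using \<open>0 \<le> incr opt_value n\<close> by linarith
  next
    case False
    then show ?thesis by (auto simp: incr_eq)
  qed
qed

lemma opt_value_incr_antimono:
  assumes "1 \<le> i" "i \<le> k"
  shows "incr opt_value k \<le> incr opt_value i"
proof (cases "i < B")
  case False
  then show ?thesis using assms by (simp add: incr_eq)
next
  case True
  have "\<forall>k\<ge>i. incr opt_value k \<le> incr opt_value i"
    using less_imp_le[OF True]
  proof (induction i rule: inc_induct)
    case base
    then show ?case by (simp add: incr_eq)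
  next
    case (step n)
    have key: "incr opt_value (Suc n) \<le> incr opt_value n"
    proof (rule ccontr)
      assume "\<not> incr opt_value (Suc n) \<le> incr opt_value n"
      then have less: "incr opt_value n < incr opt_value (Suc n)" by simp
      then have pos: "0 < incr opt_value (Suc n)"
        using opt_value_incr_nonneg[of n] by linarith
      then have "Suc n < B" by (simp add: incr_eq split: if_splits)
      have "1 \<le> n" using assms(1) step(1) by simp
      obtain u where "incr opt_value (Suc n) \<le> (\<Sum>k. arr_wt u k * incr opt_value (n + k))"
        using opt_value_incr_upper[OF \<open>1 \<le> n\<close> \<open>Suc n < B\<close>] by blast
      also have "\<dots> \<le> serv_disc u * incr opt_value (Suc n)"
      proof (rule suminf_arr_wt_incr_le)
        show "incr opt_value (n + k) \<le> incr opt_value (Suc n)" for k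
          using less step.IH by (cases k) auto
      qed
      also have "\<dots> < incr opt_value (Suc n)"
        using pos serv_disc_bounds[of u] by simp
      finally show False by simp
    qed
    show ?case
    proof (intro allI impI)
      fix k
      assume "n \<le> k"
      then consider "k = n" | "Suc n \<le> k" by linarith
      then show "incr opt_value k \<le> incr opt_value n"
        by cases (auto intro: order.trans[OF step.IH[rule_format] key])
    qed
  qed
  then show ?thesis using assms by blast
qed

definition q_gap :: "nat \<Rightarrow> real" where
  "q_gap n = q_value PathA opt_value n - q_value PathB opt_value n"

lemma q_gap_Suc_le: "q_gap (Suc n) \<le> q_gap n"
proof (cases "n = 0")
  case True
  then show ?thesis by (simp add: q_gap_def q_value_def start_level_def)
next
  case False
  define x where "x k = incr opt_value (n + k)" for k
  define f where "f k = arr_wt PathA k - arr_wt PathB k" for k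
  have "1 \<le> n" using False by simp
  have finite_sum: "(\<Sum>k. arr_wt u k * x k) = (\<Sum>k<B. arr_wt u k * x k)" for u
    using \<open>1 \<le> n\<close> by (intro suminf_finite) (auto simp: x_def incr_eq)
  have "q_gap (Suc n) - q_gap n = (\<Sum>k. arr_wt PathA k * x k) - (\<Sum>k. arr_wt PathB k * x k)"
    unfolding q_gap_def x_def
    using q_value_Suc_diff[OF \<open>1 \<le> n\<close>, of PathA opt_value]
      q_value_Suc_diff[OF \<open>1 \<le> n\<close>, of PathB opt_value] by linarith
  also have "\<dots> = (\<Sum>k<B. f k * x k)"
    by (simp only: finite_sum f_def left_diff_distrib sum_subtractf)
  also have "\<dots> = (\<Sum>k<B. (\<Sum>i\<le>k. f i) * (x k - x (Suc k))) + (\<Sum>i<B. f i) * x B"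
    by (rule sum_by_parts)
  also have "\<dots> \<le> 0"
  proof -
    have "x B = 0" by (simp add: x_def incr_eq)
    moreover have "(\<Sum>i\<le>k. f i) \<le> 0" for k
      using sum_arr_wt_A_le_B[of "Suc k"] by (simp add: f_def sum_subtractf lessThan_Suc_atMost)
    moreover have "0 \<le> x k - x (Suc k)" for k
      using opt_value_incr_antimono[of "n + k" "Suc (n + k)"] \<open>1 \<le> n\<close> by (simp add: x_def)
    ultimately show ?thesis
      by (simp add: sum_nonpos mult_nonpos_nonneg)
  qed
  finally show ?thesis by simp
qed

definition greedy_policy :: "nat \<Rightarrow> path" where
  "greedy_policy n = (if 0 \<le> q_gap n then PathA else PathB)"

lemma greedy_policy_threshold:
  "\<exists>!t. t \<le> B \<and> (\<forall>n<B. greedy_policy n = (if n < t then PathA else PathB))"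
proof -
  have "0 \<le> q_gap n" if "0 \<le> q_gap (Suc n)" for n
    using that q_gap_Suc_le[of n] by linarith
  then obtain t where "t \<le> B" and t: "\<forall>n<B. 0 \<le> q_gap n \<longleftrightarrow> n < t"
    using threshold_of_down_closed[of "\<lambda>n. 0 \<le> q_gap n" B] by blast
  have "\<forall>n<B. greedy_policy n = (if n < t then PathA else PathB)"
    using t by (simp add: greedy_policy_def)
  then show ?thesis
    using ex1_threshold[where f = greedy_policy and x = PathA and y = PathB] \<open>t \<le> B\<close> by simp
qed

lemma policy_value_fixpoint:
  "\<forall>n<B. bellman_pol lam gam mu p B pol (policy_value lam gam mu p B pol) n = policy_value lam gam mu p B pol n"
  unfolding policy_value_def
  by (intro allI impI monotone_contraction.lim_iterate_fixpoint[OF bellman_pol_contraction])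

lemma q_value_le_max: "q_value u V n \<le> max (q_value PathA V n) (q_value PathB V n)"
  by (cases u) auto

lemma q_value_greedy: "q_value (greedy_policy n) opt_value n = max (q_value PathA opt_value n) (q_value PathB opt_value n)"
proof (cases "0 \<le> q_gap n")
  case True
  then show ?thesis by (simp add: greedy_policy_def q_gap_def max_absorb1)
next
  case False
  then have "q_value PathA opt_value n \<le> q_value PathB opt_value n"
    by (simp add: q_gap_def)
  with False show ?thesis by (simp add: greedy_policy_def max_absorb2)
qed

lemma bellman_pol_opt_value_le: "\<forall>n<B. bellman_pol lam gam mu p B pol opt_value n \<le> opt_value n"
proof (intro allI impI)
  fix n
  assume "n < B"
  have "idle_factor n * q_value (pol n) opt_value n \<le> bellman_opt opt_value n"
    unfolding bellman_opt_def using q_value_le_max idle_factor_bounds(1) by (rule mult_left_mono)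
  then show "bellman_pol lam gam mu p B pol opt_value n \<le> opt_value n"
    using opt_value_fixpoint \<open>n < B\<close> by (simp add: bellman_pol_eq)
qed

lemma bellman_pol_greedy: "\<forall>n<B. bellman_pol lam gam mu p B greedy_policy opt_value n = opt_value n"
  using opt_value_fixpoint by (simp add: bellman_pol_eq bellman_opt_def q_value_greedy)

lemma greedy_policy_optimal: "optimal_policy lam gam mu p B greedy_policy"
proof -
  have "policy_value lam gam mu p B pol n \<le> opt_value n" if "n < B" for pol n
  proof -
    have "\<forall>n<B. policy_value lam gam mu p B pol n
        \<le> bellman_pol lam gam mu p B pol (policy_value lam gam mu p B pol) n"
      using policy_value_fixpoint[of pol] by simp
    then show ?thesis
      by (rule monotone_contraction.subsolution_le_supersolution[OF bellman_pol_contraction _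
            bellman_pol_opt_value_le that])
  qed
  moreover have "policy_value lam gam mu p B greedy_policy n = opt_value n" if "n < B" for n
    using monotone_contraction.fixpoint_unique[OF bellman_pol_contraction
        policy_value_fixpoint bellman_pol_greedy that] .
  ultimately show ?thesis
    unfolding optimal_policy_def by simp
qed

end

theorem theorem1:
  fixes lam gam :: real and mu p :: "path \<Rightarrow> real" and B :: nat
  assumes "lam > 0" and "gam > 0" and "B \<ge> 2"
    and "0 < mu PathA" and "mu PathA < mu PathB"
    and "0 \<le> p PathA" and "p PathA < p PathB" and "p PathB \<le> 1"
  shows "\<exists>pol. optimal_policy lam gam mu p B pol \<and>
           (\<exists>!t. t \<le> B \<and> (\<forall>n<B. pol n = (if n < t then PathA else PathB)))"
proof -
  have "p u \<le> 1" for u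
    using assms(7,8) by (cases u) auto
  then interpret queue_model lam gam mu p B
    using assms by unfold_locales
  from greedy_policy_optimal greedy_policy_threshold show ?thesis
    by blast
qed

end
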